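(* Let $\omega$ be a clustering state, let $j\mapsto A_j\in\mathcal O$ be a Cauchy sequence with respect to $\|\cdot\|_{\mathcal H_\omega}$, and let $A\in\mathcal H_\omega$ be its limit. Let $Q_\omega$ be the (unique) left pseudolocal charge with $Q_\omega(B)=\langle A,B\rangle_\omega$ for all $B\in\mathcal O$, and for each $j$ let $Q^{(j)}_\omega$ be the left pseudolocal charge of the local sequence $\sum_{x\in\mathbb Z^D}\iota_x(A_j)$. Then $Q_\omega=\lim_{j\to\infty}Q^{(j)}_\omega$, the limit being in the norm $\|P\|:=\sup\{|P(B)|/\|B\|_{\mathcal H_\omega}:B\in\mathcal O,\ \|B\|_{\mathcal H_\omega}>0\}$.
   Context: Setting: Fix $D\ge1$, $\mathbb Z^D$ with $\mathrm{dist}(x,y)=\sum_i|x_i-y_i|$, $\mathtt B(n)=\{x:\mathrm{dist}(x,0)\le n\}$. $\mathcal O$ is a complex normed space with distinguished $\mathbf 1$ of norm 1, finite-dimensional subspaces $\mathcal O_X$ ($X$ finite) with $\mathcal O_\emptyset=\mathbb C\mathbf 1$, $X\subset Y\Rightarrow\mathcal O_X\subset\mathcal O_Y$, $\mathcal O_X\cap\mathcal O_Y=\mathcal O_{X\cap Y}$, $\mathcal O=\bigcup_X\mathcal O_X$; $\mathrm{supp}(A)$ smallest $X$ with $A\in\mathcal O_X$, $|A|=|\mathrm{supp}A|$, $\mathrm{dist}(A,B)$ distance of supports ($\mathrm{dist}(A,\mathbf 1)=\infty$). Completion $\mathcal A$ is a unital $C^*$-algebra, $\mathcal O_X$ are $C^*$-subalgebras,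 disjointly supported elements commute with union support of the product; translations $\iota_x$ are $*$-automorphisms, $\iota_x\iota_y=\iota_{x+y}$, $\mathrm{supp}(\iota_xA)=\mathrm{supp}(A)+x$. Clustering state: translation-invariant state $\omega$ with $\nu:\mathbb N\to\mathbb R^+$, $f:\mathbb Z\to\mathbb R^+$, $p>D$, $f(d)\le d^{-p}$ ($d>0$), and $|\omega(AB)-\omega(A)\omega(B)|\le\nu(\ell)\|A\|\|B\|f(\mathrm{dist}(A,B))$ for $|A|,|B|<\ell$. $\langle A,B\rangle_\omega:=\sum_{x}(\omega(\iota_x(A)^*B)-\omega(A^* )\omega(B))$; $\mathcal H_\omega$ the completion of $\mathcal O$ modulo the null space, $\|B\|_{\mathcal H_\omega}=\langle B,B\rangle_\omega^{1/2}$. Pseudolocal sequence $Q=(Q_n)$, $Q_n\in\mathcal O_{\mathtt B(n)}$, w.r.t. $\omega$: $Q'_n:=Q_n-\omega(Q_n)\mathbf 1$ satisfies (I) $\omega(Q_n'^*Q'_n)\le\gamma n^D$ for some $\gamma>0$ and all $n$; (II) $Q_\omega(A):=\lim_n\omega(Q_n'^*A)$ exists for all $A\in\mathcal O$; (III) there is $0<k<1$ with $\lim_n\max_{x,y\in\mathtt B(kn)}|\omega(Q_n'^*\iota_xA)-\omega(Q_n'^*\iota_yA)|=0$ for all $A$. $Q_\omega$ is its left pseudolocal charge. Local sequence with density $C\in\mathcal O$, $\mathrm{supp}(C)\subset\mathtt B(u)$: $Q_n=\sum_{x\in\mathtt B(n-u)}\iota_x(C)$ for $n\ge u$, $Q_n=0$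 otherwise, denoted $\sum_x\iota_x(C)$; it is pseudolocal and its left charge is $B\mapsto\langle C,B\rangle_\omega$. Every element $A\in\mathcal H_\omega$ corresponds to a unique left pseudolocal charge $B\mapsto\langle A,B\rangle_\omega$. *)

theory Defs
  imports "HOL-Analysis.Analysis"
begin

text \<open>Lattice sites of Z^D are functions 'd => int for a finite index type 'd, D = CARD('d).
 The C*-algebra (completion of O) is the ambient type 'a; complex scalars act through the
 unital central embedding sc : complex => 'a; adj is the involution; Obs X is O_X.\<close>

definition zdist :: "('d::finite \<Rightarrow> int) \<Rightarrow> ('d \<Rightarrow> int) \<Rightarrow> int" where
  "zdist x y = (\<Sum>i\<in>UNIV. \<bar>x i - y i\<bar>)"

definition zadd :: "('d::finite \<Rightarrow> int) \<Rightarrow> ('d \<Rightarrow> int) \<Rightarrow> ('d \<Rightarrow> int)" where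
  "zadd x y = (\<lambda>i. x i + y i)"

text \<open>B(r) = {x. dist(x,0) \<le> r}, with a real radius (to allow B(k n)).\<close>
definition zball :: "real \<Rightarrow> ('d::finite \<Rightarrow> int) set" where
  "zball r = {x. real_of_int (zdist x (\<lambda>_. 0)) \<le> r}"

definition set_zdist :: "('d::finite \<Rightarrow> int) set \<Rightarrow> ('d \<Rightarrow> int) set \<Rightarrow> int" where
  "set_zdist X Y = Min {zdist x y | x y. x \<in> X \<and> y \<in> Y}"

definition cspan :: "(complex \<Rightarrow> 'a::ring_1) \<Rightarrow> 'a set \<Rightarrow> 'a set" where
  "cspan sc F = {y. \<exists>c. y = (\<Sum>f\<in>F. sc (c f) * f)}"

definition local_obs :: "(('d::finite \<Rightarrow> int) set \<Rightarrow> 'a set) \<Rightarrow> 'a set" where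
  "local_obs Obs = (\<Union>X\<in>{X. finite X}. Obs X)"

definition supp :: "(('d::finite \<Rightarrow> int) set \<Rightarrow> 'a set) \<Rightarrow> 'a \<Rightarrow> ('d \<Rightarrow> int) set" where
  "supp Obs A = \<Inter>{X. finite X \<and> A \<in> Obs X}"

definition quasi_local_algebra ::
  "(complex \<Rightarrow> 'a::{real_normed_algebra_1,banach}) \<Rightarrow> ('a \<Rightarrow> 'a)
   \<Rightarrow> (('d::finite \<Rightarrow> int) set \<Rightarrow> 'a set) \<Rightarrow> (('d \<Rightarrow> int) \<Rightarrow> 'a \<Rightarrow> 'a) \<Rightarrow> bool" where
  "quasi_local_algebra sc adj Obs \<iota> \<longleftrightarrow>
     \<comment> \<open>complex unital Banach algebra: central unital embedding of the scalars\<close>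
     sc 1 = 1 \<and> (\<forall>a b. sc (a + b) = sc a + sc b) \<and> (\<forall>a b. sc (a * b) = sc a * sc b)
   \<and> (\<forall>r. sc (complex_of_real r) = of_real r) \<and> (\<forall>c x. sc c * x = x * sc c)
   \<and> (\<forall>c x. norm (sc c * x) = cmod c * norm x)
     \<comment> \<open>C*-involution\<close>
   \<and> (\<forall>a. adj (adj a) = a) \<and> (\<forall>a b. adj (a + b) = adj a + adj b)
   \<and> (\<forall>a b. adj (a * b) = adj b * adj a) \<and> (\<forall>c a. adj (sc c * a) = sc (cnj c) * adj a)
   \<and> (\<forall>a. norm (adj a * a) = (norm a)\<^sup>2)
     \<comment> \<open>local structure: finite-dimensional C*-subalgebras O_X\<close>
   \<and> (\<forall>X. finite X \<longrightarrow> (\<exists>F. finite F \<and> F \<subseteq> Obs X \<and> Obs X = cspan sc F))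
   \<and> (\<forall>X. finite X \<longrightarrow> 1 \<in> Obs X \<and> (\<forall>a\<in>Obs X. \<forall>b\<in>Obs X. a * b \<in> Obs X)
                          \<and> (\<forall>a\<in>Obs X. adj a \<in> Obs X))
   \<and> Obs {} = range sc
   \<and> (\<forall>X Y. finite Y \<and> X \<subseteq> Y \<longrightarrow> Obs X \<subseteq> Obs Y)
   \<and> (\<forall>X Y. finite X \<and> finite Y \<longrightarrow> Obs X \<inter> Obs Y = Obs (X \<inter> Y))
   \<and> closure (local_obs Obs) = UNIV
   \<and> (\<forall>a\<in>local_obs Obs. \<forall>b\<in>local_obs Obs. supp Obs a \<inter> supp Obs b = {} \<longrightarrow>
        a * b = b * a \<and> (a \<noteq> 0 \<and> b \<noteq> 0 \<longrightarrow> supp Obs (a * b) = supp Obs a \<union> supp Obs b))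
     \<comment> \<open>translations: *-automorphisms, group action, shifting supports\<close>
   \<and> (\<forall>x. bij (\<iota> x))
   \<and> (\<forall>x a b. \<iota> x (a + b) = \<iota> x a + \<iota> x b) \<and> (\<forall>x a b. \<iota> x (a * b) = \<iota> x a * \<iota> x b)
   \<and> (\<forall>x c a. \<iota> x (sc c * a) = sc c * \<iota> x a) \<and> (\<forall>x a. \<iota> x (adj a) = adj (\<iota> x a))
   \<and> (\<forall>x. \<iota> x 1 = 1)
   \<and> (\<forall>x y. \<iota> x \<circ> \<iota> y = \<iota> (zadd x y))
   \<and> (\<forall>x a. a \<in> local_obs Obs \<longrightarrow> \<iota> x a \<in> local_obs Obs \<and> supp Obs (\<iota> x a) = zadd x ` supp Obs a)"

definition is_state :: "(complex \<Rightarrow> 'a::ring_1) \<Rightarrow> ('a \<Rightarrow> 'a) \<Rightarrow> ('a \<Rightarrow> complex) \<Rightarrow> bool" where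
  "is_state sc adj \<omega> \<longleftrightarrow> (\<forall>a b. \<omega> (a + b) = \<omega> a + \<omega> b) \<and> (\<forall>c a. \<omega> (sc c * a) = c * \<omega> a)
     \<and> (\<forall>a. Im (\<omega> (adj a * a)) = 0 \<and> Re (\<omega> (adj a * a)) \<ge> 0) \<and> \<omega> 1 = 1"

definition clustering_state ::
  "(complex \<Rightarrow> 'a::{real_normed_algebra_1,banach}) \<Rightarrow> ('a \<Rightarrow> 'a)
   \<Rightarrow> (('d::finite \<Rightarrow> int) set \<Rightarrow> 'a set) \<Rightarrow> (('d \<Rightarrow> int) \<Rightarrow> 'a \<Rightarrow> 'a) \<Rightarrow> ('a \<Rightarrow> complex) \<Rightarrow> bool" where
  "clustering_state sc adj Obs \<iota> \<omega> \<longleftrightarrow> is_state sc adj \<omega> \<and> (\<forall>x a. \<omega> (\<iota> x a) = \<omega> a)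
   \<and> (\<exists>(\<nu>::nat \<Rightarrow> real) (f::int \<Rightarrow> real) (p::real). p > real CARD('d)
        \<and> (\<forall>l. \<nu> l \<ge> 0) \<and> (\<forall>d. f d \<ge> 0) \<and> (\<forall>d>0. f d \<le> real_of_int d powr (- p))
        \<and> (\<forall>l A B. A \<in> local_obs Obs \<and> B \<in> local_obs Obs \<and> card (supp Obs A) < l \<and> card (supp Obs B) < l
               \<and> supp Obs A \<noteq> {} \<and> supp Obs B \<noteq> {} \<longrightarrow>
             cmod (\<omega> (A * B) - \<omega> A * \<omega> B)
               \<le> \<nu> l * norm A * norm B * f (set_zdist (supp Obs A) (supp Obs B))))"

definition hinner :: "('a \<Rightarrow> 'a) \<Rightarrow> (('d::finite \<Rightarrow> int) \<Rightarrow> 'a \<Rightarrow> 'a) \<Rightarrow> ('a::ring_1 \<Rightarrow> complex) \<Rightarrow> 'a \<Rightarrow> 'a \<Rightarrow> complex" where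
  "hinner adj \<iota> \<omega> A B = infsum (\<lambda>x. \<omega> (adj (\<iota> x A) * B) - \<omega> (adj A) * \<omega> B) UNIV"

definition hnorm :: "('a \<Rightarrow> 'a) \<Rightarrow> (('d::finite \<Rightarrow> int) \<Rightarrow> 'a \<Rightarrow> 'a) \<Rightarrow> ('a::ring_1 \<Rightarrow> complex) \<Rightarrow> 'a \<Rightarrow> real" where
  "hnorm adj \<iota> \<omega> B = sqrt (Re (hinner adj \<iota> \<omega> B B))"

definition centered :: "(complex \<Rightarrow> 'a::ring_1) \<Rightarrow> ('a \<Rightarrow> complex) \<Rightarrow> 'a \<Rightarrow> 'a" where
  "centered sc \<omega> Q = Q - sc (\<omega> Q)"

definition pseudolocal ::
  "(complex \<Rightarrow> 'a::{real_normed_algebra_1,banach}) \<Rightarrow> ('a \<Rightarrow> 'a)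
   \<Rightarrow> (('d::finite \<Rightarrow> int) set \<Rightarrow> 'a set) \<Rightarrow> (('d \<Rightarrow> int) \<Rightarrow> 'a \<Rightarrow> 'a) \<Rightarrow> ('a \<Rightarrow> complex)
   \<Rightarrow> (nat \<Rightarrow> 'a) \<Rightarrow> bool" where
  "pseudolocal sc adj Obs \<iota> \<omega> Qs \<longleftrightarrow>
     (\<forall>n. Qs n \<in> Obs (zball (real n)))
   \<and> (\<exists>\<gamma>>0. \<forall>n\<ge>1. Re (\<omega> (adj (centered sc \<omega> (Qs n)) * centered sc \<omega> (Qs n)))
                      \<le> \<gamma> * real n ^ CARD('d))
   \<and> (\<forall>A\<in>local_obs Obs. convergent (\<lambda>n. \<omega> (adj (centered sc \<omega> (Qs n)) * A)))
   \<and> (\<exists>k. 0 < k \<and> k < 1 \<and> (\<forall>A\<in>local_obs Obs.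
        (\<lambda>n. Max {cmod (\<omega> (adj (centered sc \<omega> (Qs n)) * \<iota> x A) - \<omega> (adj (centered sc \<omega> (Qs n)) * \<iota> y A))
                  | x y. x \<in> zball (k * real n) \<and> y \<in> zball (k * real n)}) \<longlonglongrightarrow> 0))"

definition left_charge :: "(complex \<Rightarrow> 'a::ring_1) \<Rightarrow> ('a \<Rightarrow> 'a) \<Rightarrow> ('a \<Rightarrow> complex) \<Rightarrow> (nat \<Rightarrow> 'a) \<Rightarrow> 'a \<Rightarrow> complex" where
  "left_charge sc adj \<omega> Qs B = lim (\<lambda>n. \<omega> (adj (centered sc \<omega> (Qs n)) * B))"

definition is_left_pseudolocal_charge ::
  "(complex \<Rightarrow> 'a::{real_normed_algebra_1,banach}) \<Rightarrow> ('a \<Rightarrow> 'a)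
   \<Rightarrow> (('d::finite \<Rightarrow> int) set \<Rightarrow> 'a set) \<Rightarrow> (('d \<Rightarrow> int) \<Rightarrow> 'a \<Rightarrow> 'a) \<Rightarrow> ('a \<Rightarrow> complex)
   \<Rightarrow> ('a \<Rightarrow> complex) \<Rightarrow> bool" where
  "is_left_pseudolocal_charge sc adj Obs \<iota> \<omega> P \<longleftrightarrow>
     (\<exists>Qs. pseudolocal sc adj Obs \<iota> \<omega> Qs \<and> (\<forall>B\<in>local_obs Obs. P B = left_charge sc adj \<omega> Qs B))"

text \<open>Local sequence with density C (supp C \<subseteq> B(u)): Q_n = sum_{x in B(n-u)} iota_x C for n \<ge> u, else 0.\<close>
definition local_seq :: "(('d::finite \<Rightarrow> int) \<Rightarrow> 'a \<Rightarrow> 'a::ring_1) \<Rightarrow> nat \<Rightarrow> 'a \<Rightarrow> nat \<Rightarrow> 'a" where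
  "local_seq \<iota> u C n = (if u \<le> n then (\<Sum>x\<in>zball (real (n - u)). \<iota> x C) else 0)"

text \<open>||P|| = sup { |P(B)| / ||B||_H : B in O, ||B||_H > 0 } (in ereal; sup of the empty set read as 0).\<close>
definition charge_norm :: "('a \<Rightarrow> 'a) \<Rightarrow> (('d::finite \<Rightarrow> int) set \<Rightarrow> 'a set) \<Rightarrow> (('d \<Rightarrow> int) \<Rightarrow> 'a \<Rightarrow> 'a)
   \<Rightarrow> ('a::ring_1 \<Rightarrow> complex) \<Rightarrow> ('a \<Rightarrow> complex) \<Rightarrow> ereal" where
  "charge_norm adj Obs \<iota> \<omega> P =
     Sup (insert 0 ((\<lambda>B. ereal (cmod (P B) / hnorm adj \<iota> \<omega> B)) ` {B \<in> local_obs Obs. hnorm adj \<iota> \<omega> B > 0}))"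

end

theory Submission
  imports Defs "HOL-Library.Function_Algebras"
begin

text \<open>The form <A,B> is a lattice sum of truncated correlations, absolutely summable because
  the clustering bound decays faster than |x|^(-D). It is Hermitian and sesquilinear, and by a
  Fejer-type averaging over large boxes it is positive semidefinite, so it satisfies the
  Cauchy-Schwarz inequality. The left charge of a local sequence with density C is
  B \<mapsto> <C,B>, since its partial sums over growing balls converge to the absolutely convergent
  lattice sum. Hence |Q(B) - Q_j(B)| = lim_m |<A_m - A_j, B>| \<le> sup_(m \<ge> N) |A_m - A_j| |B|,
  which is small uniformly in B once j \<ge> N.\<close>

section \<open>Bounded maps on finite-dimensional subspaces of Banach spaces\<close>

lemma norm_scaleR_add_span_lower_bound:
  fixes F :: "'a::real_normed_vector set"
  assumes "closed (span F)" "g \<notin> span F"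
  obtains d where "d > 0" "\<And>t w. w \<in> span F \<Longrightarrow> \<bar>t\<bar> * d \<le> norm (t *\<^sub>R g + w)"
proof -
  from assms obtain d where d: "d > 0" "ball g d \<subseteq> - span F"
    using open_contains_ball[of "- span F"] by (auto simp: open_Compl)
  hence far: "d \<le> norm (g - w)" if "w \<in> span F" for w
    using that by (auto simp: ball_def dist_norm subset_iff not_less)
  have "\<bar>t\<bar> * d \<le> norm (t *\<^sub>R g + w)" if w: "w \<in> span F" for t w
  proof (cases "t = 0")
    case False
    have "d \<le> norm (g - (- inverse t) *\<^sub>R w)"
      using far span_scale[OF w] by blast
    also have "g - (- inverse t) *\<^sub>R w = inverse t *\<^sub>R (t *\<^sub>R g + w)"
      using False by (simp add: algebra_simps)
    finally have "\<bar>t\<bar> * d \<le> \<bar>t\<bar> * (\<bar>inverse t\<bar> * norm (t *\<^sub>R g + w))"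
      by (simp add: mult_left_mono)
    also have "\<dots> = norm (t *\<^sub>R g + w)" using False by (simp add: abs_inverse)
    finally show ?thesis .
  qed simp
  with d(1) show ?thesis using that by blast
qed

lemma closed_span_finite:
  fixes F :: "'a::banach set"
  assumes "finite F"
  shows "closed (span F)"
using assms proof (induction F rule: finite_induct)
  case (insert g F)
  show ?case
  proof (cases "g \<in> span F")
    case True thus ?thesis using insert.IH by (simp add: span_redundant)
  next
    case False
    obtain d where d: "d > 0" "\<And>t w. w \<in> span F \<Longrightarrow> \<bar>t\<bar> * d \<le> norm (t *\<^sub>R g + w)"
      using norm_scaleR_add_span_lower_bound[OF insert.IH False] by blast
    show ?thesis
      unfolding closed_sequential_limits
    proof (intro allI impI, elim conjE)
      fix x l assume xs: "\<forall>n. x n \<in> span (insert g F)" and lim: "x \<longlonglongrightarrow> l"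
      have "\<forall>n. \<exists>k. x n - k *\<^sub>R g \<in> span F" using xs span_breakdown_eq by blast
      then obtain t where t: "\<And>n. x n - t n *\<^sub>R g \<in> span F" by metis
      have "Cauchy t"
      proof (rule CauchyI)
        fix e :: real assume "e > 0"
        from LIMSEQ_imp_Cauchy[OF lim] obtain M where M: "\<forall>m\<ge>M. \<forall>n\<ge>M. norm (x m - x n) < e * d"
          using \<open>e > 0\<close> d(1) CauchyD mult_pos_pos by blast
        have "norm (t m - t n) < e" if "m \<ge> M" "n \<ge> M" for m n
        proof -
          have w: "(x m - t m *\<^sub>R g) - (x n - t n *\<^sub>R g) \<in> span F" using t span_diff by blast
          have "\<bar>t m - t n\<bar> * d \<le> norm ((t m - t n) *\<^sub>R g + ((x m - t m *\<^sub>R g) - (x n - t n *\<^sub>R g)))"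
            using d(2)[OF w] .
          also have "\<dots> = norm (x m - x n)" by (simp add: algebra_simps)
          also have "\<dots> < e * d" using M that by blast
          finally show ?thesis using d(1) by simp
        qed
        thus "\<exists>M. \<forall>m\<ge>M. \<forall>n\<ge>M. norm (t m - t n) < e" by blast
      qed
      then obtain \<tau> where "t \<longlonglongrightarrow> \<tau>" using Cauchy_convergent_iff convergent_def by blast
      hence "(\<lambda>n. x n - t n *\<^sub>R g) \<longlonglongrightarrow> l - \<tau> *\<^sub>R g" by (intro tendsto_intros lim)
      hence "l - \<tau> *\<^sub>R g \<in> span F"
        using insert.IH t unfolding closed_sequential_limits by (metis (no_types, lifting))
      thus "l \<in> span (insert g F)" using span_breakdown_eq by blast
    qed
  qed
qed simp

lemma additive_homogeneous_bounded_on_finite_span: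
  fixes F :: "'a::banach set" and \<phi> :: "'a \<Rightarrow> 'b::real_normed_vector"
  assumes "finite F" and add: "\<And>a b. \<phi> (a + b) = \<phi> a + \<phi> b"
    and scale: "\<And>r a. \<phi> (r *\<^sub>R a) = r *\<^sub>R \<phi> a"
  shows "\<exists>L\<ge>0. \<forall>v\<in>span F. norm (\<phi> v) \<le> L * norm v"
using assms(1) proof (induction F rule: finite_induct)
  case empty
  have "\<phi> 0 = 0" using scale[of 0 0] by simp
  thus ?case by auto
next
  case (insert g F)
  then obtain L where L: "L \<ge> 0" "\<forall>v\<in>span F. norm (\<phi> v) \<le> L * norm v" by blast
  show ?case
  proof (cases "g \<in> span F")
    case True thus ?thesis using L span_redundant[OF True] by metis
  next
    case False
    obtain d where d: "d > 0" "\<And>t w. w \<in> span F \<Longrightarrow> \<bar>t\<bar> * d \<le> norm (t *\<^sub>R g + w)"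
      using norm_scaleR_add_span_lower_bound[OF closed_span_finite[OF insert.hyps(1)] False] by blast
    define L' where "L' = norm (\<phi> g) / d + L + L * norm g / d"
    have "norm (\<phi> v) \<le> L' * norm v" if v: "v \<in> span (insert g F)" for v
    proof -
      obtain t where w: "v - t *\<^sub>R g \<in> span F" using v span_breakdown_eq by blast
      define w where "w = v - t *\<^sub>R g"
      have tle: "\<bar>t\<bar> \<le> norm v / d"
        using d(2)[OF w, of t] d(1) by (simp add: field_simps)
      have "norm w \<le> norm v + \<bar>t\<bar> * norm g"
        using norm_triangle_ineq4[of v "t *\<^sub>R g"] unfolding w_def by simp
      also have "\<dots> \<le> norm v + (norm v / d) * norm g"
        using mult_right_mono[OF tle, of "norm g"] by simp
      finally have wle: "norm w \<le> norm v + (norm v / d) * norm g" .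
      have "v = t *\<^sub>R g + w" unfolding w_def by simp
      hence "norm (\<phi> v) = norm (t *\<^sub>R \<phi> g + \<phi> w)"
        using add scale by simp
      also have "\<dots> \<le> \<bar>t\<bar> * norm (\<phi> g) + L * norm w"
        using L(2) w norm_triangle_ineq[of "t *\<^sub>R \<phi> g" "\<phi> w"] unfolding w_def by force
      also have "\<dots> \<le> (norm v / d) * norm (\<phi> g) + L * (norm v + (norm v / d) * norm g)"
        using tle wle L(1) by (intro add_mono mult_right_mono mult_left_mono) auto
      also have "\<dots> = L' * norm v" unfolding L'_def by (simp add: field_simps)
      finally show ?thesis .
    qed
    moreover have "L' \<ge> 0" unfolding L'_def using L d by simp
    ultimately show ?thesis by blast
  qed
qed

lemma zadd_eq_plus: "zadd x y = x + y"
  by (simp add: zadd_def fun_eq_iff)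

definition znorm :: "('d::finite \<Rightarrow> int) \<Rightarrow> int" where
  "znorm x = (\<Sum>i\<in>UNIV. \<bar>x i\<bar>)"

lemma znorm_nonneg: "0 \<le> znorm x"
  unfolding znorm_def by (simp add: sum_nonneg)

lemma zdist_eq_znorm: "zdist x y = znorm (x - y)"
  unfolding zdist_def znorm_def by simp

lemma zball_eq: "zball r = {x. real_of_int (znorm x) \<le> r}"
  unfolding zball_def zdist_def znorm_def by simp

lemma abs_le_znorm: "\<bar>x i\<bar> \<le> znorm x"
  unfolding znorm_def using member_le_sum[of i UNIV "\<lambda>i. \<bar>x i\<bar>"] by simp

lemma znorm_triangle: "znorm (x + y) \<le> znorm x + znorm y"
  unfolding znorm_def by (simp add: sum.distrib[symmetric] sum_mono abs_triangle_ineq)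

lemma znorm_minus: "znorm (- x) = znorm x"
  unfolding znorm_def by simp

lemma finite_znorm_le: "finite {x::'d::finite \<Rightarrow> int. znorm x \<le> k}"
proof (rule finite_subset)
  show "{x::'d \<Rightarrow> int. znorm x \<le> k} \<subseteq> PiE UNIV (\<lambda>_. {-k..k})"
  proof
    fix x :: "'d \<Rightarrow> int" assume "x \<in> {x. znorm x \<le> k}"
    hence "x i \<in> {-k..k}" for i using abs_le_znorm[of x i] by (simp add: abs_le_iff)
    thus "x \<in> PiE UNIV (\<lambda>_. {-k..k})" by (simp add: PiE_UNIV_domain)
  qed
qed (simp add: finite_PiE)

lemma finite_zball: "finite (zball r :: ('d::finite \<Rightarrow> int) set)"
proof (rule finite_subset)
  show "zball r \<subseteq> {x::'d \<Rightarrow> int. znorm x \<le> \<lfloor>r\<rfloor>}"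
    unfolding zball_eq by (auto simp: le_floor_iff)
qed (rule finite_znorm_le)

lemma summable_on_int_powr:
  assumes "q > 1"
  shows "(\<lambda>k::int. (1 + real_of_int \<bar>k\<bar>) powr (- q)) summable_on UNIV"
proof -
  define g where "g k = (1 + real_of_int \<bar>k\<bar>) powr (- q)" for k :: int
  have "summable (\<lambda>n. real n powr (- q))" using assms summable_real_powr_iff by simp
  hence s: "summable (\<lambda>n. real (Suc n) powr (- q))" by (subst summable_Suc_iff)
  hence s': "summable (\<lambda>n. real (Suc (Suc n)) powr (- q))"
    using summable_Suc_iff[of "\<lambda>n. real (Suc n) powr (- q)"] by simp
  have "g summable_on (int ` UNIV)"
    using s by (subst summable_on_reindex) (auto simp: g_def o_def add.commute summable_on_UNIV_nonneg_real_iff)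
  moreover have "g summable_on ((\<lambda>n. - int (Suc n)) ` UNIV)"
    using s' by (subst summable_on_reindex)
      (auto simp: inj_on_def g_def o_def add.commute summable_on_UNIV_nonneg_real_iff)
  ultimately have "g summable_on (int ` UNIV \<union> (\<lambda>n. - int (Suc n)) ` UNIV)"
    by (rule summable_on_union)
  moreover have "int ` UNIV \<union> (\<lambda>n. - int (Suc n)) ` UNIV = UNIV"
  proof (rule set_eqI)
    fix k :: int
    show "k \<in> int ` UNIV \<union> (\<lambda>n. - int (Suc n)) ` UNIV \<longleftrightarrow> k \<in> UNIV"
      by (cases "k \<ge> 0") (auto intro: image_eqI[of _ _ "nat k"] image_eqI[of _ _ "nat (- k - 1)"])
  qed
  ultimately show ?thesis unfolding g_def by simp
qed

lemma summable_on_prod_coordinates: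
  fixes g :: "int \<Rightarrow> real"
  assumes "g summable_on UNIV" "\<And>k. g k \<ge> 0"
  shows "(\<lambda>x::'d::finite \<Rightarrow> int. \<Prod>i\<in>UNIV. g (x i)) summable_on UNIV"
proof -
  have "Infinite_Set_Sum.abs_summable_on g UNIV"
    using assms unfolding abs_summable_equivalent[symmetric] by simp
  hence "Infinite_Set_Sum.abs_summable_on (\<lambda>x::'d \<Rightarrow> int. \<Prod>i\<in>UNIV. g (x i)) (PiE UNIV (\<lambda>_. UNIV))"
    by (intro abs_summable_on_prod_PiE) auto
  hence "(\<lambda>x::'d \<Rightarrow> int. norm (\<Prod>i\<in>UNIV. g (x i))) summable_on UNIV"
    by (simp add: PiE_UNIV_domain abs_summable_equivalent[symmetric])
  thus ?thesis using assms(2) by (simp add: prod_nonneg)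
qed

lemma one_plus_znorm_powr_le_prod:
  fixes x :: "'d::finite \<Rightarrow> int"
  assumes "p \<ge> 0"
  shows "(1 + real_of_int (znorm x)) powr (- p)
         \<le> (\<Prod>i\<in>UNIV. (1 + real_of_int \<bar>x i\<bar>) powr (- (p / real CARD('d))))"
proof -
  define P where "P = (\<Prod>i\<in>UNIV. 1 + real_of_int \<bar>x i\<bar>)"
  have P0: "P > 0" unfolding P_def by (intro prod_pos) (simp add: add_pos_nonneg)
  have "P \<le> (\<Prod>i\<in>(UNIV::'d set). 1 + real_of_int (znorm x))"
    unfolding P_def
  proof (intro prod_mono conjI)
    show "1 + real_of_int \<bar>x i\<bar> \<le> 1 + real_of_int (znorm x)" for i
      using abs_le_znorm[of x i] by linarith
  qed simp
  also have "\<dots> = (1 + real_of_int (znorm x)) powr real CARD('d)"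
    using znorm_nonneg[of x] by (simp add: powr_realpow add_pos_nonneg)
  finally have "P powr (- (p / real CARD('d))) \<ge>
      ((1 + real_of_int (znorm x)) powr real CARD('d)) powr (- (p / real CARD('d)))"
    using P0 assms by (intro powr_mono2') auto
  also have "((1 + real_of_int (znorm x)) powr real CARD('d)) powr (- (p / real CARD('d)))
      = (1 + real_of_int (znorm x)) powr (- p)"
    by (simp add: powr_powr)
  finally show ?thesis unfolding P_def by (simp add: prod_powr_distrib)
qed

lemma summable_on_znorm_powr:
  assumes "p > real CARD('d::finite)"
  shows "(\<lambda>x::'d \<Rightarrow> int. (1 + real_of_int (znorm x)) powr (- p)) summable_on UNIV"
proof (rule summable_on_comparison_test)
  show "(\<lambda>x::'d \<Rightarrow> int. \<Prod>i\<in>UNIV. (1 + real_of_int \<bar>x i\<bar>) powr (- (p / real CARD('d)))) summable_on UNIV"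
    using assms by (intro summable_on_prod_coordinates summable_on_int_powr) auto
  show "(1 + real_of_int (znorm x)) powr (- p)
        \<le> (\<Prod>i\<in>UNIV. (1 + real_of_int \<bar>x i\<bar>) powr (- (p / real CARD('d))))" for x :: "'d \<Rightarrow> int"
    using one_plus_znorm_powr_le_prod[of p x] assms by simp
qed simp

lemma set_zdist_translate_lower_bound:
  fixes S T :: "('d::finite \<Rightarrow> int) set"
  assumes "finite S" "finite T" "S \<noteq> {}" "T \<noteq> {}"
    and "\<And>s. s \<in> S \<Longrightarrow> znorm s \<le> R" "\<And>t. t \<in> T \<Longrightarrow> znorm t \<le> R"
  shows "znorm x - 2 * R \<le> set_zdist ((+) x ` S) T"
proof -
  have eq: "{zdist y z | y z. y \<in> (+) x ` S \<and> z \<in> T} = (\<lambda>(s, t). zdist (x + s) t) ` (S \<times> T)"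
    by auto
  have "znorm x - 2 * R \<le> zdist (x + s) t" if "s \<in> S" "t \<in> T" for s t
  proof -
    have "znorm x \<le> znorm (x + s - t) + znorm (t - s)"
      using znorm_triangle[of "x + s - t" "t - s"] by simp
    moreover have "znorm (t - s) \<le> znorm t + znorm s"
      using znorm_triangle[of t "- s"] znorm_minus[of s] by simp
    ultimately show ?thesis
      using assms(5)[OF that(1)] assms(6)[OF that(2)] by (simp add: zdist_eq_znorm)
  qed
  thus ?thesis unfolding set_zdist_def eq using assms(1-4) by (subst Min_ge_iff) auto
qed

section \<open>Positive definite functions on the lattice\<close>

definition zbox :: "int \<Rightarrow> int \<Rightarrow> ('d::finite \<Rightarrow> int) set" where
  "zbox a b = PiE UNIV (\<lambda>_. {a..<b})"

lemma finite_zbox: "finite (zbox a b)"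
  unfolding zbox_def by (simp add: finite_PiE)

lemma card_zbox: "card (zbox a b :: ('d::finite \<Rightarrow> int) set) = nat (b - a) ^ CARD('d)"
  unfolding zbox_def by (simp add: card_PiE)

lemma card_zbox_shrink_ge:
  assumes "0 \<le> r" "2 * r < N"
  shows "(1 - real CARD('d) * (2 * r) / N) * real (card (zbox 0 N :: ('d::finite \<Rightarrow> int) set))
         \<le> real (card (zbox r (N - r) :: ('d \<Rightarrow> int) set))"
proof -
  define a where "a = real_of_int (2 * r) / real_of_int N"
  have "0 \<le> a" "a \<le> 1" unfolding a_def using assms by (auto simp: divide_le_eq)
  hence "1 + real CARD('d) * (- a) \<le> (1 + (- a)) ^ CARD('d)"
    by (intro Bernoulli_inequality) simp
  hence "(1 - real CARD('d) * a) * real_of_int N ^ CARD('d) \<le> ((1 - a) * real_of_int N) ^ CARD('d)"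
    using assms by (simp add: power_mult_distrib mult_right_mono)
  also have "(1 - a) * real_of_int N = real_of_int (N - 2 * r)"
    unfolding a_def using assms by (simp add: field_simps)
  finally show ?thesis
    using assms unfolding card_zbox a_def by (simp add: of_nat_power)
qed

lemma finite_set_with_small_infsum_complement:
  fixes g :: "'b \<Rightarrow> real"
  assumes "g summable_on UNIV" "e > 0"
  obtains K where "finite K" "infsum g (UNIV - K) \<le> e"
proof -
  obtain K where K: "finite K" "dist (sum g K) (infsum g UNIV) \<le> e"
    using infsum_finite_approximation[OF assms] by blast
  have "infsum g (UNIV - K) = infsum g UNIV - sum g K"
    using assms(1) K(1) by (subst infsum_Diff) auto
  also have "\<dots> \<le> e" using K(2) by (simp add: dist_real_def)
  finally show ?thesis using that K(1) by blast
qed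

lemma norm_infsum_complement_le:
  fixes \<phi> :: "'b \<Rightarrow> complex"
  assumes "(\<lambda>z. norm (\<phi> z)) summable_on UNIV" "S \<subseteq> T"
  shows "norm (infsum \<phi> (UNIV - T)) \<le> infsum (\<lambda>z. norm (\<phi> z)) (UNIV - S)"
proof -
  have sT: "(\<lambda>z. norm (\<phi> z)) summable_on (UNIV - T)" and sS: "(\<lambda>z. norm (\<phi> z)) summable_on (UNIV - S)"
    by (auto intro: summable_on_subset_banach[OF assms(1)])
  have "norm (infsum \<phi> (UNIV - T)) \<le> infsum (\<lambda>z. norm (\<phi> z)) (UNIV - T)"
    using sT by (intro norm_infsum_bound) (simp add: abs_summable_equivalent[symmetric])
  also have "\<dots> \<le> infsum (\<lambda>z. norm (\<phi> z)) (UNIV - S)"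
    using assms(2) by (intro infsum_mono2[OF sT sS]) auto
  finally show ?thesis .
qed

lemma card_mult_Re_infsum_ge:
  fixes \<phi> :: "('d::finite \<Rightarrow> int) \<Rightarrow> complex"
  assumes "\<phi> summable_on UNIV" "finite F"
  shows "Re (\<Sum>x\<in>F. \<Sum>y\<in>F. \<phi> (x - y)) - (\<Sum>y\<in>F. norm (infsum \<phi> (UNIV - (\<lambda>x. x - y) ` F)))
         \<le> real (card F) * Re (infsum \<phi> UNIV)"
proof -
  define T where "T y = infsum \<phi> (UNIV - (\<lambda>x. x - y) ` F)" for y
  have split: "infsum \<phi> UNIV = (\<Sum>x\<in>F. \<phi> (x - y)) + T y" for y
  proof -
    have "(\<Sum>x\<in>F. \<phi> (x - y)) = infsum \<phi> ((\<lambda>x. x - y) ` F)"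
      using assms(2) by (simp add: sum.reindex inj_on_def o_def)
    moreover have "T y = infsum \<phi> UNIV - infsum \<phi> ((\<lambda>x. x - y) ` F)"
      unfolding T_def using assms by (intro infsum_Diff) auto
    ultimately show ?thesis by simp
  qed
  have "of_nat (card F) * infsum \<phi> UNIV = (\<Sum>y\<in>F. (\<Sum>x\<in>F. \<phi> (x - y)) + T y)"
    by (simp flip: split)
  also have "\<dots> = (\<Sum>y\<in>F. \<Sum>x\<in>F. \<phi> (x - y)) + (\<Sum>y\<in>F. T y)"
    by (rule sum.distrib)
  also have "(\<Sum>y\<in>F. \<Sum>x\<in>F. \<phi> (x - y)) = (\<Sum>x\<in>F. \<Sum>y\<in>F. \<phi> (x - y))"
    by (rule sum.swap)
  finally have "Re (of_nat (card F) * infsum \<phi> UNIV)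
      = Re (\<Sum>x\<in>F. \<Sum>y\<in>F. \<phi> (x - y)) + Re (\<Sum>y\<in>F. T y)"
    by simp
  hence "real (card F) * Re (infsum \<phi> UNIV) = Re (\<Sum>x\<in>F. \<Sum>y\<in>F. \<phi> (x - y)) + Re (\<Sum>y\<in>F. T y)"
    by simp
  moreover have "- (\<Sum>y\<in>F. norm (T y)) \<le> Re (\<Sum>y\<in>F. T y)"
    using abs_Re_le_cmod[of "\<Sum>y\<in>F. T y"] norm_sum[of T F] by linarith
  ultimately show ?thesis unfolding T_def by linarith
qed

text \<open>Discrete Fejer argument: averaging the partial sums of a positive definite function over
  the translates of a large box, the box boundary, where the truncation error is not small, has
  relative size of order 1/N.\<close>
lemma Re_infsum_nonneg_if_positive_definite:
  fixes \<phi> :: "('d::finite \<Rightarrow> int) \<Rightarrow> complex"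
  assumes abs_summable: "(\<lambda>z. norm (\<phi> z)) summable_on UNIV"
    and pos_def: "\<And>F. finite F \<Longrightarrow> 0 \<le> Re (\<Sum>x\<in>F. \<Sum>y\<in>F. \<phi> (x - y))"
  shows "0 \<le> Re (infsum \<phi> UNIV)"
proof -
  define M where "M = infsum (\<lambda>z. norm (\<phi> z)) UNIV"
  define D where "D = real CARD('d)"
  have M0: "M \<ge> 0" unfolding M_def by (intro infsum_nonneg) auto
  have summable: "\<phi> summable_on UNIV"
    using abs_summable summable_on_iff_abs_summable_on_complex by blast
  have approx: "- 2 * e \<le> Re (infsum \<phi> UNIV)" if e: "e > 0" for e
  proof -
    obtain K where K: "finite K" "infsum (\<lambda>z. norm (\<phi> z)) (UNIV - K) \<le> e"
      using finite_set_with_small_infsum_complement[OF abs_summable e] .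
    define r where "r = Max (insert 0 (znorm ` K))"
    have r0: "r \<ge> 0" and rK: "\<And>z. z \<in> K \<Longrightarrow> znorm z \<le> r"
      unfolding r_def using K(1) by auto
    define N :: int where "N = 2 * r + 1 + \<lceil>D * (2 * r) * M / e\<rceil>"
    have "0 \<le> D * (2 * r) * M / e" unfolding D_def using r0 M0 e by simp
    hence N: "2 * r < N" "D * (2 * r) * M / e \<le> N" unfolding N_def using r0 by linarith+
    hence NB: "D * (2 * r) / N * M \<le> e" using e r0 by (simp add: field_simps)
    define F :: "('d \<Rightarrow> int) set" where "F = zbox 0 N"
    define In :: "('d \<Rightarrow> int) set" where "In = zbox r (N - r)"
    define T where "T y = norm (infsum \<phi> (UNIV - (\<lambda>x. x - y) ` F))" for y
    have finF: "finite F" unfolding F_def by (rule finite_zbox)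
    have In_F: "In \<subseteq> F" unfolding In_def F_def zbox_def using r0 by (intro PiE_mono) auto
    have T_le_M: "T y \<le> M" for y
      using norm_infsum_complement_le[OF abs_summable, of "{}"] unfolding T_def M_def by simp
    have T_le_e: "T y \<le> e" if y: "y \<in> In" for y
    proof -
      have "z + y \<in> F" if z: "z \<in> K" for z
      proof -
        have "(z + y) i \<in> {0..<N}" for i
        proof -
          have "r \<le> y i \<and> y i < N - r" using y unfolding In_def zbox_def
            by (auto simp: PiE_UNIV_domain Pi_iff)
          thus ?thesis using abs_le_znorm[of z i] rK[OF z] by auto
        qed
        thus ?thesis unfolding F_def zbox_def by (simp add: PiE_UNIV_domain)
      qed
      hence "K \<subseteq> (\<lambda>x. x - y) ` F" by (auto intro: image_eqI[of _ _ "_ + y"])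
      thus ?thesis using norm_infsum_complement_le[OF abs_summable] K(2) unfolding T_def
        by (meson order_trans)
    qed
    have "(\<Sum>y\<in>F. T y) = (\<Sum>y\<in>In. T y) + (\<Sum>y\<in>F - In. T y)"
      using sum.subset_diff[OF In_F finF] by (simp add: add.commute)
    also have "\<dots> \<le> real (card In) * e + real (card (F - In)) * M"
      using T_le_e T_le_M by (intro add_mono) (simp_all add: sum_bounded_above)
    also have "\<dots> \<le> real (card F) * e + (D * (2 * r) / N * real (card F)) * M"
    proof -
      have "real (card In) \<le> real (card F)"
        using card_mono[OF finF In_F] by simp
      moreover have "real (card (F - In)) \<le> D * (2 * r) / N * real (card F)"
        using card_zbox_shrink_ge[OF r0 N(1), where 'd='d] card_Diff_subset[OF finite_subset[OF In_F finF] In_F]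
          card_mono[OF finF In_F]
        unfolding F_def In_def D_def by (simp add: of_nat_diff left_diff_distrib)
      ultimately show ?thesis using e M0 by (intro add_mono mult_right_mono) auto
    qed
    also have "\<dots> = real (card F) * e + (D * (2 * r) / N * M) * real (card F)"
      by (simp add: algebra_simps)
    also have "\<dots> \<le> real (card F) * (2 * e)"
      using mult_right_mono[OF NB, of "real (card F)"] by simp
    finally have "(\<Sum>y\<in>F. T y) \<le> real (card F) * (2 * e)" .
    moreover have "Re (\<Sum>x\<in>F. \<Sum>y\<in>F. \<phi> (x - y)) - (\<Sum>y\<in>F. T y) \<le> real (card F) * Re (infsum \<phi> UNIV)"
      using card_mult_Re_infsum_ge[OF summable finF] unfolding T_def .
    ultimately have "real (card F) * (- 2 * e) \<le> real (card F) * Re (infsum \<phi> UNIV)"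
      using pos_def[OF finF] by linarith
    moreover have "real (card F) > 0" unfolding F_def card_zbox using N(1) r0 by simp
    ultimately show ?thesis by (rule mult_le_cancel_left_pos[THEN iffD1, rotated])
  qed
  show ?thesis
  proof (rule ccontr)
    assume "\<not> 0 \<le> Re (infsum \<phi> UNIV)"
    with approx[of "- Re (infsum \<phi> UNIV) / 4"] show False by linarith
  qed
qed

lemma filterlim_zball_finite_subsets_at_top:
  "filterlim (\<lambda>n. zball (real (n - u)) :: ('d::finite \<Rightarrow> int) set) (finite_subsets_at_top UNIV) sequentially"
  unfolding filterlim_finite_subsets_at_top
proof (intro allI impI, elim conjE)
  fix X :: "('d \<Rightarrow> int) set" assume X: "finite X"
  define m where "m = Max (insert 0 (znorm ` X))"
  have m: "\<And>x. x \<in> X \<Longrightarrow> znorm x \<le> m" and m0: "m \<ge> 0" unfolding m_def using X by auto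
  show "\<forall>\<^sub>F n in sequentially. finite (zball (real (n - u))) \<and> X \<subseteq> zball (real (n - u))
          \<and> zball (real (n - u)) \<subseteq> UNIV"
    using eventually_ge_at_top[of "u + nat m"]
  proof eventually_elim
    case (elim n)
    hence "X \<subseteq> zball (real (n - u))" using m m0 unfolding zball_eq by force
    thus ?case using finite_zball by blast
  qed
qed

lemma sum_zball_tendsto_infsum:
  fixes f :: "('d::finite \<Rightarrow> int) \<Rightarrow> complex"
  assumes "f summable_on UNIV"
  shows "(\<lambda>n. sum f (zball (real (n - u)))) \<longlonglongrightarrow> infsum f UNIV"
  using filterlim_compose[OF has_sum_infsum[OF assms, unfolded has_sum_def]
      filterlim_zball_finite_subsets_at_top] .

lemma charge_norm_nonneg: "0 \<le> charge_norm adj Obs \<iota> \<omega> P"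
  unfolding charge_norm_def by (rule Sup_upper) simp

lemma charge_norm_le:
  assumes "0 \<le> e"
    and "\<And>B. B \<in> local_obs Obs \<Longrightarrow> 0 < hnorm adj \<iota> \<omega> B \<Longrightarrow> cmod (P B) \<le> e * hnorm adj \<iota> \<omega> B"
  shows "charge_norm adj Obs \<iota> \<omega> P \<le> ereal e"
  unfolding charge_norm_def
proof (rule Sup_least, elim insertE imageE)
  fix y B assume "y = ereal (cmod (P B) / hnorm adj \<iota> \<omega> B)"
    and "B \<in> {B \<in> local_obs Obs. 0 < hnorm adj \<iota> \<omega> B}"
  thus "y \<le> ereal e" using assms(2)[of B] by (simp add: divide_le_eq)
qed (use assms(1) in simp)

lemma ereal_LIMSEQ_zeroI:
  fixes f :: "nat \<Rightarrow> ereal"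
  assumes "\<And>j. 0 \<le> f j" and "\<And>e. 0 < e \<Longrightarrow> \<exists>N. \<forall>j\<ge>N. f j \<le> ereal e"
  shows "f \<longlonglongrightarrow> 0"
proof (rule order_tendstoI)
  fix a :: ereal assume "a < 0"
  hence "a < f j" for j using assms(1)[of j] by (rule less_le_trans)
  thus "\<forall>\<^sub>F j in sequentially. a < f j" by simp
next
  fix a :: ereal assume "0 < a"
  then obtain e where e: "0 < ereal e" "ereal e < a" using ereal_dense2 by blast
  then obtain N where "\<forall>j\<ge>N. f j \<le> ereal e" using assms(2) by auto
  thus "\<forall>\<^sub>F j in sequentially. f j < a"
    unfolding eventually_sequentially using e(2) by (auto intro: le_less_trans)
qed

locale clustering_system =
  fixes sc :: "complex \<Rightarrow> 'a::{real_normed_algebra_1,banach}"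
    and adj :: "'a \<Rightarrow> 'a"
    and Obs :: "('d::finite \<Rightarrow> int) set \<Rightarrow> 'a set"
    and \<iota> :: "('d \<Rightarrow> int) \<Rightarrow> 'a \<Rightarrow> 'a"
    and \<omega> :: "'a \<Rightarrow> complex"
  assumes quasi_local: "quasi_local_algebra sc adj Obs \<iota>"
    and clustering: "clustering_state sc adj Obs \<iota> \<omega>"
begin

lemma
  shows sc_one: "sc 1 = 1"
    and sc_add [rule_format]: "\<forall>c c'. sc (c + c') = sc c + sc c'"
    and sc_mult [rule_format]: "\<forall>c c'. sc (c * c') = sc c * sc c'"
    and sc_of_real [rule_format]: "\<forall>r. sc (complex_of_real r) = of_real r"
    and sc_commute [rule_format]: "\<forall>c a. sc c * a = a * sc c"
    and adj_adj [rule_format, simp]: "\<forall>a. adj (adj a) = a"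
    and adj_add [rule_format]: "\<forall>a b. adj (a + b) = adj a + adj b"
    and adj_mult [rule_format]: "\<forall>a b. adj (a * b) = adj b * adj a"
    and adj_sc_mult [rule_format]: "\<forall>c a. adj (sc c * a) = sc (cnj c) * adj a"
    and norm_adj_mult_self [rule_format]: "\<forall>a. norm (adj a * a) = (norm a)\<^sup>2"
    and Obs_finite_span [rule_format]:
      "\<forall>X. finite X \<longrightarrow> (\<exists>F. finite F \<and> F \<subseteq> Obs X \<and> Obs X = cspan sc F)"
    and Obs_subalgebra [rule_format]: "\<forall>X. finite X \<longrightarrow> 1 \<in> Obs X
      \<and> (\<forall>a\<in>Obs X. \<forall>b\<in>Obs X. a * b \<in> Obs X) \<and> (\<forall>a\<in>Obs X. adj a \<in> Obs X)"
    and Obs_empty: "Obs {} = range sc"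
    and Obs_mono [rule_format]: "\<forall>X Y. finite Y \<and> X \<subseteq> Y \<longrightarrow> Obs X \<subseteq> Obs Y"
    and Obs_Int [rule_format]: "\<forall>X Y. finite X \<and> finite Y \<longrightarrow> Obs X \<inter> Obs Y = Obs (X \<inter> Y)"
    and bij_iota [rule_format]: "\<forall>x. bij (\<iota> x)"
    and iota_add [rule_format]: "\<forall>x a b. \<iota> x (a + b) = \<iota> x a + \<iota> x b"
    and iota_mult [rule_format]: "\<forall>x a b. \<iota> x (a * b) = \<iota> x a * \<iota> x b"
    and iota_sc_mult [rule_format]: "\<forall>x c a. \<iota> x (sc c * a) = sc c * \<iota> x a"
    and iota_adj [rule_format]: "\<forall>x a. \<iota> x (adj a) = adj (\<iota> x a)"
    and iota_one [rule_format]: "\<forall>x. \<iota> x 1 = 1"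
    and iota_comp [rule_format]: "\<forall>x y. \<iota> x \<circ> \<iota> y = \<iota> (zadd x y)"
    and iota_local_obs_supp [rule_format]: "\<forall>x a. a \<in> local_obs Obs \<longrightarrow>
      \<iota> x a \<in> local_obs Obs \<and> supp Obs (\<iota> x a) = zadd x ` supp Obs a"
  by (insert quasi_local[unfolded quasi_local_algebra_def], elim conjE, assumption)+

lemma
  shows omega_add [rule_format]: "\<forall>a b. \<omega> (a + b) = \<omega> a + \<omega> b"
    and omega_sc_mult [rule_format]: "\<forall>c a. \<omega> (sc c * a) = c * \<omega> a"
    and omega_adj_mult_self [rule_format]: "\<forall>a. Im (\<omega> (adj a * a)) = 0 \<and> Re (\<omega> (adj a * a)) \<ge> 0"
    and omega_one: "\<omega> 1 = 1"
    and omega_iota [rule_format]: "\<forall>x a. \<omega> (\<iota> x a) = \<omega> a"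
  by (insert clustering[unfolded clustering_state_def is_state_def], elim conjE, assumption)+

lemma iota_iota: "\<iota> x (\<iota> y a) = \<iota> (x + y) a"
  using iota_comp[of x y] by (metis comp_apply zadd_eq_plus)

lemma iota_local_obs: "a \<in> local_obs Obs \<Longrightarrow> \<iota> x a \<in> local_obs Obs"
  using iota_local_obs_supp by blast

lemma supp_iota: "a \<in> local_obs Obs \<Longrightarrow> supp Obs (\<iota> x a) = (+) x ` supp Obs a"
  using iota_local_obs_supp by (simp add: zadd_eq_plus)

lemma clustering_bound:
  obtains \<nu> :: "nat \<Rightarrow> real" and f :: "int \<Rightarrow> real" and p :: real
  where "p > real CARD('d)" "\<And>l. \<nu> l \<ge> 0" "\<And>d. f d \<ge> 0" "\<And>d. d > 0 \<Longrightarrow> f d \<le> real_of_int d powr (- p)"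
    and "\<And>l A B. A \<in> local_obs Obs \<Longrightarrow> B \<in> local_obs Obs \<Longrightarrow> card (supp Obs A) < l
          \<Longrightarrow> card (supp Obs B) < l \<Longrightarrow> supp Obs A \<noteq> {} \<Longrightarrow> supp Obs B \<noteq> {} \<Longrightarrow>
          cmod (\<omega> (A * B) - \<omega> A * \<omega> B) \<le> \<nu> l * norm A * norm B * f (set_zdist (supp Obs A) (supp Obs B))"
  using clustering that unfolding clustering_state_def by metis

lemma sc_zero [simp]: "sc 0 = 0"
  using sc_add[of 0 0] by simp

lemma sc_uminus: "sc (- c) = - sc c"
  using sc_add[of c "- c"] by (simp add: add_eq_0_iff)

lemma scaleR_eq_sc_mult: "r *\<^sub>R a = sc (complex_of_real r) * a"
  by (simp add: sc_of_real scaleR_conv_of_real)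

lemma adj_zero [simp]: "adj 0 = 0"
  using adj_add[of 0 0] by simp

lemma adj_diff: "adj (a - b) = adj a - adj b"
  using adj_add[of a "- b"] adj_add[of b "- b"] by (simp add: add_eq_0_iff)

lemma adj_sum: "adj (sum f S) = (\<Sum>x\<in>S. adj (f x))"
  by (induction S rule: infinite_finite_induct) (auto simp: adj_add)

lemma adj_one [simp]: "adj 1 = 1"
  using adj_mult[of "adj 1" 1] by simp

lemma adj_sc: "adj (sc c) = sc (cnj c)"
  using adj_sc_mult[of c 1] by simp

lemma adj_power: "adj (a ^ n) = adj a ^ n"
  by (induction n) (auto simp: adj_mult power_commutes)

lemma norm_adj: "norm (adj a) = norm a"
proof -
  have le: "norm b \<le> norm (adj b)" for b
  proof -
    have "norm b * norm b \<le> norm (adj b) * norm b"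
      using norm_adj_mult_self[of b] norm_mult_ineq[of "adj b" b] by (simp add: power2_eq_square)
    thus ?thesis by (cases "norm b = 0") auto
  qed
  from le[of a] le[of "adj a"] show ?thesis by simp
qed

lemma iota_zero [simp]: "\<iota> x 0 = 0"
  using iota_add[of x 0 0] by simp

lemma iota_diff: "\<iota> x (a - b) = \<iota> x a - \<iota> x b"
  using iota_add[of x a "- b"] iota_add[of x b "- b"] by (simp add: add_eq_0_iff)

lemma iota_sc: "\<iota> x (sc c) = sc c"
  using iota_sc_mult[of x c 1] by (simp add: iota_one)

lemma iota_power: "\<iota> x (a ^ n) = \<iota> x a ^ n"
  by (induction n) (auto simp: iota_mult iota_one)

lemma iota_origin [simp]: "\<iota> 0 a = a"
  using bij_iota[of 0] iota_iota[of 0 0 a] by (simp add: bij_def inj_eq)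

lemma omega_zero [simp]: "\<omega> 0 = 0"
  using omega_add[of 0 0] by simp

lemma omega_diff: "\<omega> (a - b) = \<omega> a - \<omega> b"
  using omega_add[of a "- b"] omega_add[of b "- b"] by (simp add: add_eq_0_iff)

lemma omega_sum: "\<omega> (sum f S) = (\<Sum>x\<in>S. \<omega> (f x))"
  by (induction S rule: infinite_finite_induct) (auto simp: omega_add)

lemma omega_sc: "\<omega> (sc c) = c"
  using omega_sc_mult[of c 1] by (simp add: omega_one)

text \<open>Positivity forces the state to be Hermitian: test it on a + 1 and a + i.\<close>
lemma omega_adj: "\<omega> (adj a) = cnj (\<omega> a)"
proof -
  have "adj (a + 1) * (a + 1) = adj a * a + adj a + a + 1"
    by (simp add: adj_add algebra_simps)
  hence Im: "Im (\<omega> (adj a)) = - Im (\<omega> a)"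
    using omega_adj_mult_self[of "a + 1"] omega_adj_mult_self[of a] by (simp add: omega_add omega_one)
  have "adj (a + sc \<i>) * (a + sc \<i>) = adj a * a + adj a * sc \<i> + sc (- \<i>) * a + sc (- \<i>) * sc \<i>"
    by (simp add: adj_add adj_sc algebra_simps)
  also have "adj a * sc \<i> = sc \<i> * adj a" by (rule sc_commute[symmetric])
  also have "sc (- \<i>) * sc \<i> = 1" by (simp flip: sc_mult add: sc_one)
  finally have "adj (a + sc \<i>) * (a + sc \<i>) = adj a * a + sc \<i> * adj a - sc \<i> * a + 1"
    by (simp add: sc_uminus)
  hence "Re (\<omega> (adj a)) = Re (\<omega> a)"
    using omega_adj_mult_self[of "a + sc \<i>"] omega_adj_mult_self[of a]
    by (simp add: omega_add omega_diff omega_one omega_sc_mult)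
  with Im show ?thesis by (simp add: complex_eq_iff)
qed

lemma Obs_one: "finite X \<Longrightarrow> 1 \<in> Obs X"
  using Obs_subalgebra by blast

lemma Obs_mult: "finite X \<Longrightarrow> a \<in> Obs X \<Longrightarrow> b \<in> Obs X \<Longrightarrow> a * b \<in> Obs X"
  using Obs_subalgebra by blast

lemma Obs_adj: "finite X \<Longrightarrow> a \<in> Obs X \<Longrightarrow> adj a \<in> Obs X"
  using Obs_subalgebra by blast

lemma Obs_power: "finite X \<Longrightarrow> a \<in> Obs X \<Longrightarrow> a ^ n \<in> Obs X"
  by (induction n) (auto simp: Obs_one Obs_mult)

lemma Obs_add: "finite X \<Longrightarrow> a \<in> Obs X \<Longrightarrow> b \<in> Obs X \<Longrightarrow> a + b \<in> Obs X"
proof -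
  assume "finite X" "a \<in> Obs X" "b \<in> Obs X"
  moreover obtain F where F: "Obs X = cspan sc F" using Obs_finite_span \<open>finite X\<close> by blast
  ultimately have "a \<in> cspan sc F" "b \<in> cspan sc F" by simp_all
  then obtain c d where "a = (\<Sum>f\<in>F. sc (c f) * f)" "b = (\<Sum>f\<in>F. sc (d f) * f)"
    unfolding cspan_def by blast
  hence "a + b = (\<Sum>f\<in>F. sc (c f + d f) * f)"
    by (simp add: sc_add distrib_right sum.distrib)
  thus ?thesis unfolding F cspan_def mem_Collect_eq by (rule exI[of _ "\<lambda>f. c f + d f"])
qed

lemma Obs_sc_mult: "finite X \<Longrightarrow> a \<in> Obs X \<Longrightarrow> sc t * a \<in> Obs X"
proof -
  assume "finite X" "a \<in> Obs X"
  moreover obtain F where F: "Obs X = cspan sc F" using Obs_finite_span \<open>finite X\<close> by blast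
  ultimately have "a \<in> cspan sc F" by simp
  then obtain c where "a = (\<Sum>f\<in>F. sc (c f) * f)" unfolding cspan_def by blast
  hence "sc t * a = (\<Sum>f\<in>F. sc (t * c f) * f)"
    by (simp add: sc_mult sum_distrib_left mult.assoc)
  thus ?thesis unfolding F cspan_def mem_Collect_eq by (rule exI[of _ "\<lambda>f. t * c f"])
qed

lemma Obs_diff: "finite X \<Longrightarrow> a \<in> Obs X \<Longrightarrow> b \<in> Obs X \<Longrightarrow> a - b \<in> Obs X"
  using Obs_add[of X a "sc (- 1) * b"] Obs_sc_mult[of X b "- 1"] by (simp add: sc_uminus sc_one)

text \<open>Complex coefficients split into real and imaginary parts.\<close>
lemma Obs_subset_finite_span:
  assumes "finite X"
  obtains G where "finite G" "Obs X \<subseteq> span G"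
proof -
  obtain F where F: "finite F" "Obs X = cspan sc F" using Obs_finite_span[OF assms] by blast
  define G where "G = F \<union> (\<lambda>f. sc \<i> * f) ` F"
  have sc_split: "sc z * f = Re z *\<^sub>R f + Im z *\<^sub>R (sc \<i> * f)" for z f
  proof -
    have "complex_of_real (Re z) + complex_of_real (Im z) * \<i> = z" by (simp add: complex_eq_iff)
    hence "sc z = sc (complex_of_real (Re z)) + sc (complex_of_real (Im z)) * sc \<i>"
      by (metis sc_add sc_mult)
    thus ?thesis by (simp add: distrib_right mult.assoc sc_of_real scaleR_conv_of_real)
  qed
  have "v \<in> span G" if "v \<in> Obs X" for v
  proof -
    have "v \<in> cspan sc F" using that F(2) by simp
    then obtain c where c: "v = (\<Sum>f\<in>F. sc (c f) * f)" unfolding cspan_def by blast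
    have "sc (c f) * f \<in> span G" if "f \<in> F" for f
      unfolding sc_split[of "c f" f] using that
      by (intro span_add span_scale span_base) (auto simp: G_def)
    thus ?thesis unfolding c by (rule span_sum)
  qed
  moreover have "finite G" unfolding G_def using F(1) by simp
  ultimately show ?thesis using that by blast
qed

lemma local_obsI: "finite X \<Longrightarrow> a \<in> Obs X \<Longrightarrow> a \<in> local_obs Obs"
  unfolding local_obs_def by blast

lemma local_obsE:
  assumes "a \<in> local_obs Obs"
  obtains X where "finite X" "a \<in> Obs X"
  using assms unfolding local_obs_def by blast

lemma local_obs_common_support:
  assumes "a \<in> local_obs Obs" "b \<in> local_obs Obs"
  obtains X where "finite X" "a \<in> Obs X" "b \<in> Obs X"
proof -
  obtain X where "finite X" "a \<in> Obs X" using assms(1) by (rule local_obsE)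
  moreover obtain Y where "finite Y" "b \<in> Obs Y" using assms(2) by (rule local_obsE)
  ultimately
  show ?thesis using that[of "X \<union> Y"] Obs_mono[where Y="X \<union> Y"] by blast
qed

lemma local_obs_add: "a \<in> local_obs Obs \<Longrightarrow> b \<in> local_obs Obs \<Longrightarrow> a + b \<in> local_obs Obs"
  by (metis local_obs_common_support Obs_add local_obsI)

lemma local_obs_diff: "a \<in> local_obs Obs \<Longrightarrow> b \<in> local_obs Obs \<Longrightarrow> a - b \<in> local_obs Obs"
  by (metis local_obs_common_support Obs_diff local_obsI)

lemma local_obs_sc_mult: "a \<in> local_obs Obs \<Longrightarrow> sc t * a \<in> local_obs Obs"
  by (metis local_obsE Obs_sc_mult local_obsI)

lemma local_obs_adj: "a \<in> local_obs Obs \<Longrightarrow> adj a \<in> local_obs Obs"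
  by (metis local_obsE Obs_adj local_obsI)

lemma supp_subset: "finite X \<Longrightarrow> a \<in> Obs X \<Longrightarrow> supp Obs a \<subseteq> X"
  unfolding supp_def by blast

lemma finite_supp: "a \<in> local_obs Obs \<Longrightarrow> finite (supp Obs a)"
  by (metis local_obsE supp_subset finite_subset)

text \<open>The support is attained: remove the points outside it one at a time, intersecting with a
  witnessing region each time.\<close>
lemma in_Obs_supp:
  assumes "a \<in> local_obs Obs"
  shows "a \<in> Obs (supp Obs a)"
proof -
  obtain X0 where X0: "finite X0" "a \<in> Obs X0" using assms by (rule local_obsE)
  have remove: "a \<in> Obs (X0 - Y)"
    if "finite Y" "\<forall>y\<in>Y. \<exists>X. finite X \<and> a \<in> Obs X \<and> y \<notin> X" for Y
  using that proof (induction Y rule: finite_induct)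
    case (insert y Y)
    then obtain X where X: "finite X" "a \<in> Obs X" "y \<notin> X" by blast
    have "a \<in> Obs ((X0 - Y) \<inter> X)"
      using insert X Obs_Int[of "X0 - Y" X] X0(1) by blast
    moreover have "(X0 - Y) \<inter> X \<subseteq> X0 - insert y Y" using X(3) by blast
    ultimately show ?case using Obs_mono[where Y="X0 - insert y Y"] X0(1) by blast
  qed (use X0 in simp)
  have "\<forall>y\<in>X0 - supp Obs a. \<exists>X. finite X \<and> a \<in> Obs X \<and> y \<notin> X"
    unfolding supp_def by blast
  hence "a \<in> Obs (X0 - (X0 - supp Obs a))"
    using X0(1) by (intro remove) auto
  moreover have "X0 - (X0 - supp Obs a) = supp Obs a" using supp_subset[OF X0] by blast
  ultimately show ?thesis by simp
qed

lemma supp_empty_imp_scalar: "a \<in> local_obs Obs \<Longrightarrow> supp Obs a = {} \<Longrightarrow> a \<in> range sc"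
  using in_Obs_supp Obs_empty by metis

lemma supp_adj: "supp Obs (adj a) = supp Obs a"
proof -
  have "finite X \<Longrightarrow> adj a \<in> Obs X \<longleftrightarrow> a \<in> Obs X" for X
    using Obs_adj[of X a] Obs_adj[of X "adj a"] by auto
  hence "{X. finite X \<and> adj a \<in> Obs X} = {X. finite X \<and> a \<in> Obs X}"
    by blast
  thus ?thesis unfolding supp_def by simp
qed

lemma norm_power_two_power_self_adjoint:
  assumes "adj s = s"
  shows "norm (s ^ (2 ^ k)) = norm s ^ (2 ^ k)"
proof (induction k)
  case (Suc k)
  have "norm (s ^ (2 ^ Suc k)) = norm (adj (s ^ (2 ^ k)) * s ^ (2 ^ k))"
    by (simp add: adj_power assms power_add[symmetric] mult_2)
  also have "\<dots> = norm s ^ (2 ^ Suc k)"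
    using Suc by (simp add: norm_adj_mult_self power_mult[symmetric] mult.commute)
  finally show ?case .
qed simp

text \<open>A translation is bounded on each finite-dimensional O_X; the C*-identity and the
  spectral-radius trick (iterating powers 2^k of a self-adjoint element) upgrade the bound to 1.\<close>
lemma norm_iota_le:
  assumes "a \<in> local_obs Obs"
  shows "norm (\<iota> x a) \<le> norm a"
proof -
  obtain X where X: "finite X" "a \<in> Obs X" using assms by (rule local_obsE)
  obtain G where G: "finite G" "Obs X \<subseteq> span G" using Obs_subset_finite_span[OF X(1)] .
  have "\<iota> x (r *\<^sub>R b) = r *\<^sub>R \<iota> x b" for r b
    by (simp add: scaleR_eq_sc_mult iota_sc_mult)
  then obtain L where L: "L \<ge> 0" "\<And>v. v \<in> Obs X \<Longrightarrow> norm (\<iota> x v) \<le> L * norm v"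
    using additive_homogeneous_bounded_on_finite_span[OF G(1), of "\<iota> x"] iota_add G(2) by blast
  define h where "h = adj a * a"
  define g where "g = \<iota> x h"
  have hX: "h \<in> Obs X" unfolding h_def using X by (intro Obs_mult Obs_adj)
  have g_self_adjoint: "adj g = g" unfolding g_def h_def by (simp flip: iota_adj add: adj_mult)
  have bound: "norm g ^ (2 ^ k) \<le> L * norm h ^ (2 ^ k)" for k
  proof -
    have "norm g ^ (2 ^ k) = norm (\<iota> x (h ^ (2 ^ k)))"
      using norm_power_two_power_self_adjoint[OF g_self_adjoint, of k] by (simp add: g_def iota_power)
    also have "\<dots> \<le> L * norm (h ^ (2 ^ k))" using L(2) Obs_power[OF X(1) hX] by simp
    also have "\<dots> \<le> L * norm h ^ (2 ^ k)" using L(1) norm_power_ineq[of h] by (simp add: mult_left_mono)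
    finally show ?thesis .
  qed
  have "norm g \<le> norm h"
  proof (rule ccontr)
    assume "\<not> norm g \<le> norm h"
    hence lt: "norm h < norm g" by simp
    show False
    proof (cases "norm h = 0")
      case True thus False using bound[of 0] lt by simp
    next
      case False
      define r where "r = norm g / norm h"
      have r1: "1 < r" unfolding r_def using lt False by simp
      obtain n where n: "L < r ^ n" using real_arch_pow[OF r1] by blast
      have "r ^ n \<le> r ^ (2 ^ n)" using r1 less_exp[of n] by (intro power_increasing) auto
      also have "\<dots> = norm g ^ (2 ^ n) / norm h ^ (2 ^ n)" unfolding r_def by (simp add: power_divide)
      also have "\<dots> \<le> L" using bound[of n] False by (simp add: divide_le_eq)
      finally show False using n by simp
    qed
  qed
  hence "(norm (\<iota> x a))\<^sup>2 \<le> (norm a)\<^sup>2"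
    unfolding g_def h_def by (simp flip: norm_adj_mult_self add: iota_mult iota_adj)
  thus ?thesis by (rule power2_le_imp_le) simp
qed

section \<open>The inner product of local observables\<close>

definition trunc_corr :: "'a \<Rightarrow> 'a \<Rightarrow> ('d \<Rightarrow> int) \<Rightarrow> complex" where
  "trunc_corr A B x = \<omega> (adj (\<iota> x A) * B) - \<omega> (adj A) * \<omega> B"

lemma hinner_eq_infsum_trunc_corr: "hinner adj \<iota> \<omega> A B = infsum (trunc_corr A B) UNIV"
  unfolding hinner_def trunc_corr_def ..

lemma omega_adj_iota: "\<omega> (adj (\<iota> x A)) = \<omega> (adj A)"
  by (simp flip: iota_adj add: omega_iota)

lemma trunc_corr_scalar_left: "trunc_corr (sc c) B x = 0"
  unfolding trunc_corr_def by (simp add: iota_sc adj_sc omega_sc_mult omega_sc)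

lemma trunc_corr_scalar_right: "trunc_corr A (sc c) x = 0"
proof -
  have "adj (\<iota> x A) * sc c = sc c * adj (\<iota> x A)" by (rule sc_commute[symmetric])
  thus ?thesis unfolding trunc_corr_def by (simp add: omega_sc_mult omega_sc omega_adj_iota)
qed

text \<open>Translating A by x moves its support at least about |x| away from that of B, so the
  clustering bound makes the truncated correlation decay like |x|^(-p).\<close>
lemma trunc_corr_decay:
  assumes A: "A \<in> local_obs Obs" and B: "B \<in> local_obs Obs"
    and "supp Obs A \<noteq> {}" "supp Obs B \<noteq> {}"
  obtains p K R where "p > real CARD('d)" "R \<ge> 0"
    "\<And>x. 4 * R < znorm x \<Longrightarrow> norm (trunc_corr A B x) \<le> K * (1 + real_of_int (znorm x)) powr (- p)"
proof -
  obtain \<nu> f p where p: "p > real CARD('d)" and \<nu>: "\<And>l. \<nu> l \<ge> 0" and f: "\<And>d. f d \<ge> 0"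
    and f_decay: "\<And>d. d > 0 \<Longrightarrow> f d \<le> real_of_int d powr (- p)"
    and cluster: "\<And>l A B. A \<in> local_obs Obs \<Longrightarrow> B \<in> local_obs Obs \<Longrightarrow> card (supp Obs A) < l
          \<Longrightarrow> card (supp Obs B) < l \<Longrightarrow> supp Obs A \<noteq> {} \<Longrightarrow> supp Obs B \<noteq> {} \<Longrightarrow>
          cmod (\<omega> (A * B) - \<omega> A * \<omega> B) \<le> \<nu> l * norm A * norm B * f (set_zdist (supp Obs A) (supp Obs B))"
    by (rule clustering_bound) blast
  define SA where "SA = supp Obs A"
  define SB where "SB = supp Obs B"
  have fin: "finite SA" "finite SB" unfolding SA_def SB_def using finite_supp A B by auto
  have ne: "SA \<noteq> {}" "SB \<noteq> {}" using assms(3,4) unfolding SA_def SB_def .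
  define R where "R = Max (znorm ` (SA \<union> SB))"
  have R: "\<And>s. s \<in> SA \<union> SB \<Longrightarrow> znorm s \<le> R" unfolding R_def using fin by simp
  have R0: "R \<ge> 0" using R[of "SOME s. s \<in> SA"] znorm_nonneg ne(1) some_in_eq
    by (metis UnI1 order_trans)
  define l where "l = Suc (card SA + card SB)"
  define K where "K = \<nu> l * norm A * norm B * 4 powr p"
  have p0: "p \<ge> 0" using p by linarith
  have "norm (trunc_corr A B x) \<le> K * (1 + real_of_int (znorm x)) powr (- p)"
    if x: "4 * R < znorm x" for x
  proof -
    define A' where "A' = adj (\<iota> x A)"
    have A'_local: "A' \<in> local_obs Obs" unfolding A'_def using A by (intro local_obs_adj iota_local_obs)
    have supp_A': "supp Obs A' = (+) x ` SA" unfolding A'_def SA_def supp_adj supp_iota[OF A] ..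
    have "card (supp Obs A') < l" unfolding supp_A' l_def by (simp add: card_image)
    moreover have "card (supp Obs B) < l" unfolding l_def SB_def by simp
    moreover have "supp Obs A' \<noteq> {}" unfolding supp_A' using ne by simp
    ultimately have "cmod (\<omega> (A' * B) - \<omega> A' * \<omega> B)
        \<le> \<nu> l * norm A' * norm B * f (set_zdist (supp Obs A') (supp Obs B))"
      using cluster[OF A'_local B] assms(4) by blast
    moreover have "trunc_corr A B x = \<omega> (A' * B) - \<omega> A' * \<omega> B"
      unfolding trunc_corr_def A'_def omega_adj_iota ..
    ultimately have "norm (trunc_corr A B x) \<le> \<nu> l * norm A' * norm B * f (set_zdist ((+) x ` SA) SB)"
      unfolding supp_A' SB_def by simp
    also have "\<dots> \<le> \<nu> l * norm A * norm B * f (set_zdist ((+) x ` SA) SB)"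
      unfolding A'_def norm_adj using norm_iota_le[OF A] \<nu> f
      by (intro mult_right_mono mult_left_mono) auto
    also have "f (set_zdist ((+) x ` SA) SB) \<le> 4 powr p * (1 + real_of_int (znorm x)) powr (- p)"
    proof -
      define d where "d = set_zdist ((+) x ` SA) SB"
      have "znorm x - 2 * R \<le> d"
        unfolding d_def using set_zdist_translate_lower_bound[OF fin ne] R by blast
      hence d: "d > 0" "1 + znorm x \<le> 4 * d" using x R0 by linarith+
      have d_real: "(1 + real_of_int (znorm x)) / 4 \<le> real_of_int d"
      proof -
        have "real_of_int (1 + znorm x) \<le> real_of_int (4 * d)" using d(2) by (simp only: of_int_le_iff)
        thus ?thesis by simp
      qed
      have "f d \<le> real_of_int d powr (- p)" using f_decay[OF d(1)] .
      also have "\<dots> \<le> ((1 + real_of_int (znorm x)) / 4) powr (- p)"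
        using d_real p0 znorm_nonneg[of x] by (intro powr_mono2') auto
      also have "\<dots> = 4 powr p * (1 + real_of_int (znorm x)) powr (- p)"
        using znorm_nonneg[of x] by (simp add: powr_divide powr_minus divide_simps)
      finally show ?thesis unfolding d_def .
    qed
    hence "\<nu> l * norm A * norm B * f (set_zdist ((+) x ` SA) SB)
        \<le> \<nu> l * norm A * norm B * (4 powr p * (1 + real_of_int (znorm x)) powr (- p))"
      using \<nu> by (intro mult_left_mono) auto
    finally show ?thesis unfolding K_def by (simp add: mult.assoc)
  qed
  with p R0 show ?thesis using that by blast
qed

lemma trunc_corr_abs_summable:
  assumes A: "A \<in> local_obs Obs" and B: "B \<in> local_obs Obs"
  shows "(\<lambda>x. norm (trunc_corr A B x)) summable_on UNIV"
proof (cases "supp Obs A = {} \<or> supp Obs B = {}")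
  case True
  hence "trunc_corr A B x = 0" for x
    using supp_empty_imp_scalar[OF A] supp_empty_imp_scalar[OF B]
    by (auto simp: trunc_corr_scalar_left trunc_corr_scalar_right)
  thus ?thesis by simp
next
  case False
  then obtain p K R where p: "p > real CARD('d)"
    and decay: "\<And>x. 4 * R < znorm x \<Longrightarrow> norm (trunc_corr A B x) \<le> K * (1 + real_of_int (znorm x)) powr (- p)"
    using trunc_corr_decay[OF A B] by blast
  define near where "near = {x::'d \<Rightarrow> int. znorm x \<le> 4 * R}"
  have "(\<lambda>x. K * (1 + real_of_int (znorm x)) powr (- p)) summable_on (UNIV - near)"
    by (intro summable_on_cmult_right summable_on_subset_banach[OF summable_on_znorm_powr[OF p]]) auto
  hence "(\<lambda>x. norm (trunc_corr A B x)) summable_on (UNIV - near)"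
    by (rule summable_on_comparison_test) (auto simp: near_def intro: decay)
  moreover have "(\<lambda>x. norm (trunc_corr A B x)) summable_on near"
    unfolding near_def by (rule summable_on_finite[OF finite_znorm_le])
  ultimately have "(\<lambda>x. norm (trunc_corr A B x)) summable_on ((UNIV - near) \<union> near)"
    by (rule summable_on_union)
  thus ?thesis by simp
qed

lemma trunc_corr_summable: "A \<in> local_obs Obs \<Longrightarrow> B \<in> local_obs Obs \<Longrightarrow> trunc_corr A B summable_on UNIV"
  using trunc_corr_abs_summable summable_on_iff_abs_summable_on_complex by blast

lemma trunc_corr_add_left: "trunc_corr (A + A') B x = trunc_corr A B x + trunc_corr A' B x"
  unfolding trunc_corr_def by (simp add: iota_add adj_add distrib_right omega_add algebra_simps)

lemma trunc_corr_add_right: "trunc_corr A (B + B') x = trunc_corr A B x + trunc_corr A B' x"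
  unfolding trunc_corr_def by (simp add: distrib_left omega_add algebra_simps)

lemma trunc_corr_sc_mult_left: "trunc_corr (sc c * A) B x = cnj c * trunc_corr A B x"
  unfolding trunc_corr_def by (simp add: iota_sc_mult adj_sc_mult mult.assoc omega_sc_mult algebra_simps)

lemma trunc_corr_sc_mult_right: "trunc_corr A (sc c * B) x = c * trunc_corr A B x"
proof -
  have "adj (\<iota> x A) * (sc c * B) = sc c * (adj (\<iota> x A) * B)"
    by (metis mult.assoc sc_commute)
  thus ?thesis unfolding trunc_corr_def by (simp add: omega_sc_mult algebra_simps)
qed

lemma trunc_corr_swap: "trunc_corr B A x = cnj (trunc_corr A B (- x))"
proof -
  have "cnj (\<omega> (adj (\<iota> (- x) A) * B)) = \<omega> (\<iota> x (adj B * \<iota> (- x) A))"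
    by (simp flip: omega_adj add: adj_mult omega_iota)
  also have "\<dots> = \<omega> (adj (\<iota> x B) * A)" by (simp add: iota_mult iota_adj iota_iota)
  finally show ?thesis unfolding trunc_corr_def by (simp add: omega_adj)
qed

lemma hinner_add_left:
  "A \<in> local_obs Obs \<Longrightarrow> A' \<in> local_obs Obs \<Longrightarrow> B \<in> local_obs Obs \<Longrightarrow>
   hinner adj \<iota> \<omega> (A + A') B = hinner adj \<iota> \<omega> A B + hinner adj \<iota> \<omega> A' B"
  unfolding hinner_eq_infsum_trunc_corr trunc_corr_add_left by (intro infsum_add trunc_corr_summable)

lemma hinner_add_right:
  "A \<in> local_obs Obs \<Longrightarrow> B \<in> local_obs Obs \<Longrightarrow> B' \<in> local_obs Obs \<Longrightarrow>
   hinner adj \<iota> \<omega> A (B + B') = hinner adj \<iota> \<omega> A B + hinner adj \<iota> \<omega> A B'"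
  unfolding hinner_eq_infsum_trunc_corr trunc_corr_add_right by (intro infsum_add trunc_corr_summable)

lemma hinner_sc_mult_left: "hinner adj \<iota> \<omega> (sc c * A) B = cnj c * hinner adj \<iota> \<omega> A B"
  unfolding hinner_eq_infsum_trunc_corr trunc_corr_sc_mult_left by (rule infsum_cmult_right')

lemma hinner_sc_mult_right: "hinner adj \<iota> \<omega> A (sc c * B) = c * hinner adj \<iota> \<omega> A B"
  unfolding hinner_eq_infsum_trunc_corr trunc_corr_sc_mult_right by (rule infsum_cmult_right')

lemma hinner_diff_left:
  assumes "A \<in> local_obs Obs" "A' \<in> local_obs Obs" "B \<in> local_obs Obs"
  shows "hinner adj \<iota> \<omega> (A - A') B = hinner adj \<iota> \<omega> A B - hinner adj \<iota> \<omega> A' B"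
proof -
  have "sc (- 1) = - 1" using sc_uminus[of 1] by (simp add: sc_one)
  hence diff: "A - A' = A + sc (- 1) * A'" by simp
  have "hinner adj \<iota> \<omega> (A - A') B = hinner adj \<iota> \<omega> A B + hinner adj \<iota> \<omega> (sc (- 1) * A') B"
    unfolding diff by (rule hinner_add_left[OF assms(1) local_obs_sc_mult[OF assms(2)] assms(3)])
  thus ?thesis by (simp add: hinner_sc_mult_left)
qed

lemma hinner_swap: "hinner adj \<iota> \<omega> B A = cnj (hinner adj \<iota> \<omega> A B)"
proof -
  have "hinner adj \<iota> \<omega> B A = cnj (infsum (\<lambda>x. trunc_corr A B (- x)) UNIV)"
    unfolding hinner_eq_infsum_trunc_corr trunc_corr_swap[of B A] by simp
  also have "infsum (\<lambda>x. trunc_corr A B (- x)) UNIV = infsum (trunc_corr A B) (uminus ` UNIV)"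
    by (subst infsum_reindex) (auto simp: o_def)
  also have "uminus ` (UNIV :: ('d \<Rightarrow> int) set) = UNIV"
    by (rule surjI[of _ uminus]) simp
  finally show ?thesis unfolding hinner_eq_infsum_trunc_corr .
qed

lemma Im_hinner_self: "Im (hinner adj \<iota> \<omega> B B) = 0"
  using arg_cong[OF hinner_swap[of B B], of Im] by simp

lemma trunc_corr_self_eq_centered:
  "trunc_corr A A z = \<omega> (adj (\<iota> z (centered sc \<omega> A)) * centered sc \<omega> A)"
proof -
  have "adj (\<iota> z (centered sc \<omega> A)) * centered sc \<omega> A
      = (adj (\<iota> z A) - sc (cnj (\<omega> A))) * (A - sc (\<omega> A))"
    unfolding centered_def by (simp add: iota_diff iota_sc adj_diff adj_sc)
  also have "\<dots> = adj (\<iota> z A) * A - adj (\<iota> z A) * sc (\<omega> A) - sc (cnj (\<omega> A)) * A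
      + sc (cnj (\<omega> A)) * sc (\<omega> A)"
    by (simp add: left_diff_distrib right_diff_distrib)
  also have "adj (\<iota> z A) * sc (\<omega> A) = sc (\<omega> A) * adj (\<iota> z A)" by (rule sc_commute[symmetric])
  also have "sc (cnj (\<omega> A)) * sc (\<omega> A) = sc (cnj (\<omega> A) * \<omega> A)" by (rule sc_mult[symmetric])
  finally have expand: "adj (\<iota> z (centered sc \<omega> A)) * centered sc \<omega> A
      = adj (\<iota> z A) * A - sc (\<omega> A) * adj (\<iota> z A) - sc (cnj (\<omega> A)) * A + sc (cnj (\<omega> A) * \<omega> A)" .
  show ?thesis unfolding trunc_corr_def expand
    by (simp add: omega_add omega_diff omega_sc_mult omega_sc omega_iota omega_adj)
qed

lemma omega_adj_sum_iota_mult_self: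
  assumes "finite F"
  shows "\<omega> (adj (\<Sum>y\<in>F. \<iota> y C) * (\<Sum>y\<in>F. \<iota> y C)) = (\<Sum>x\<in>F. \<Sum>y\<in>F. \<omega> (adj (\<iota> (x - y) C) * C))"
proof -
  have "\<omega> (adj (\<iota> x C) * \<iota> y C) = \<omega> (adj (\<iota> (x - y) C) * C)" for x y
  proof -
    have "\<omega> (adj (\<iota> x C) * \<iota> y C) = \<omega> (\<iota> (- y) (adj (\<iota> x C) * \<iota> y C))" by (simp add: omega_iota)
    also have "\<dots> = \<omega> (adj (\<iota> (x - y) C) * C)" by (simp add: iota_mult iota_adj iota_iota)
    finally show ?thesis .
  qed
  thus ?thesis unfolding adj_sum sum_product by (simp add: omega_sum)
qed

lemma Re_hinner_self_nonneg:
  assumes "A \<in> local_obs Obs"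
  shows "0 \<le> Re (hinner adj \<iota> \<omega> A A)"
  unfolding hinner_eq_infsum_trunc_corr
proof (rule Re_infsum_nonneg_if_positive_definite)
  show "(\<lambda>z. norm (trunc_corr A A z)) summable_on UNIV" by (rule trunc_corr_abs_summable[OF assms assms])
  show "0 \<le> Re (\<Sum>x\<in>F. \<Sum>y\<in>F. trunc_corr A A (x - y))" if "finite F" for F
  proof -
    define S where "S = (\<Sum>y\<in>F. \<iota> y (centered sc \<omega> A))"
    have "(\<Sum>x\<in>F. \<Sum>y\<in>F. trunc_corr A A (x - y)) = \<omega> (adj S * S)"
      unfolding trunc_corr_self_eq_centered S_def omega_adj_sum_iota_mult_self[OF that] ..
    thus ?thesis using omega_adj_mult_self[of S] by simp
  qed
qed

lemma hinner_Cauchy_Schwarz: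
  assumes A: "A \<in> local_obs Obs" and B: "B \<in> local_obs Obs"
    and B_pos: "0 < hnorm adj \<iota> \<omega> B"
  shows "norm (hinner adj \<iota> \<omega> A B) \<le> hnorm adj \<iota> \<omega> A * hnorm adj \<iota> \<omega> B"
proof -
  define z where "z = hinner adj \<iota> \<omega> A B"
  define a where "a = Re (hinner adj \<iota> \<omega> A A)"
  define b where "b = Re (hinner adj \<iota> \<omega> B B)"
  have b0: "b > 0" using B_pos unfolding b_def hnorm_def by simp
  have hBB: "hinner adj \<iota> \<omega> B B = complex_of_real b"
    unfolding b_def using Im_hinner_self[of B] by (simp add: complex_eq_iff)
  \<comment> \<open>expand the form at A + t B for the minimizing coefficient t\<close>
  define t where "t = - cnj z / complex_of_real b"
  have tB: "sc t * B \<in> local_obs Obs" using B by (rule local_obs_sc_mult)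
  have "hinner adj \<iota> \<omega> (A + sc t * B) (A + sc t * B)
      = hinner adj \<iota> \<omega> A A + t * z + cnj t * (cnj z + t * complex_of_real b)"
    using hinner_add_left[OF A tB local_obs_add[OF A tB]] hinner_add_right[OF A A tB]
      hinner_add_right[OF B A tB] hinner_swap[of A B]
    by (simp add: hinner_sc_mult_left hinner_sc_mult_right hBB z_def)
  also have "cnj z + t * complex_of_real b = 0" unfolding t_def using b0 by simp
  also have "t * z = - complex_of_real ((norm z)\<^sup>2 / b)"
    unfolding t_def using complex_norm_square[of z] by (simp add: mult.commute)
  finally have "0 \<le> a - (norm z)\<^sup>2 / b"
    using Re_hinner_self_nonneg[OF local_obs_add[OF A tB]] unfolding a_def by simp
  hence "(norm z)\<^sup>2 \<le> a * b" using b0 by (simp add: field_simps)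
  hence "norm z \<le> sqrt (a * b)" using real_le_rsqrt by blast
  thus ?thesis unfolding z_def hnorm_def a_def[symmetric] b_def[symmetric] by (simp add: real_sqrt_mult)
qed

section \<open>Charges of local sequences\<close>

lemma omega_adj_centered_sum_iota_mult:
  assumes "finite Z"
  shows "\<omega> (adj (centered sc \<omega> (\<Sum>x\<in>Z. \<iota> x C)) * B) = (\<Sum>x\<in>Z. trunc_corr C B x)"
proof -
  define Q where "Q = (\<Sum>x\<in>Z. \<iota> x C)"
  have "adj (centered sc \<omega> Q) * B = adj Q * B - sc (cnj (\<omega> Q)) * B"
    unfolding centered_def by (simp add: adj_diff adj_sc left_diff_distrib)
  hence "\<omega> (adj (centered sc \<omega> Q) * B) = \<omega> (adj Q * B) - cnj (\<omega> Q) * \<omega> B"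
    by (simp add: omega_diff omega_sc_mult)
  also have "\<omega> (adj Q * B) = (\<Sum>x\<in>Z. \<omega> (adj (\<iota> x C) * B))"
    unfolding Q_def adj_sum sum_distrib_right omega_sum ..
  also have "cnj (\<omega> Q) * \<omega> B = (\<Sum>x\<in>Z. \<omega> (adj C) * \<omega> B)"
    unfolding Q_def by (simp add: omega_sum omega_iota omega_adj)
  finally show ?thesis unfolding Q_def trunc_corr_def by (simp add: sum_subtractf)
qed

lemma left_charge_local_seq:
  assumes C: "C \<in> local_obs Obs" and B: "B \<in> local_obs Obs"
  shows "left_charge sc adj \<omega> (local_seq \<iota> u C) B = hinner adj \<iota> \<omega> C B"
proof -
  have "\<forall>\<^sub>F n in sequentially. sum (trunc_corr C B) (zball (real (n - u)))
          = \<omega> (adj (centered sc \<omega> (local_seq \<iota> u C n)) * B)"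
    using eventually_ge_at_top[of u]
    by eventually_elim (simp add: local_seq_def omega_adj_centered_sum_iota_mult[OF finite_zball])
  with sum_zball_tendsto_infsum[OF trunc_corr_summable[OF C B]]
  have "(\<lambda>n. \<omega> (adj (centered sc \<omega> (local_seq \<iota> u C n)) * B)) \<longlonglongrightarrow> hinner adj \<iota> \<omega> C B"
    unfolding hinner_eq_infsum_trunc_corr by (rule Lim_transform_eventually)
  thus ?thesis unfolding left_charge_def by (rule limI)
qed

lemma hinner_limit_dist_le:
  assumes As: "\<And>m. As m \<in> local_obs Obs" and A: "A \<in> local_obs Obs" and B: "B \<in> local_obs Obs"
    and B_pos: "0 < hnorm adj \<iota> \<omega> B"
    and lim: "(\<lambda>m. hinner adj \<iota> \<omega> (As m) B) \<longlonglongrightarrow> q"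
    and close: "\<And>m. N \<le> m \<Longrightarrow> hnorm adj \<iota> \<omega> (As m - A) \<le> e"
  shows "cmod (q - hinner adj \<iota> \<omega> A B) \<le> e * hnorm adj \<iota> \<omega> B"
proof (rule LIMSEQ_le_const2)
  show "(\<lambda>m. cmod (hinner adj \<iota> \<omega> (As m - A) B)) \<longlonglongrightarrow> cmod (q - hinner adj \<iota> \<omega> A B)"
    unfolding hinner_diff_left[OF As A B] by (intro tendsto_intros lim)
  show "\<exists>N. \<forall>m\<ge>N. cmod (hinner adj \<iota> \<omega> (As m - A) B) \<le> e * hnorm adj \<iota> \<omega> B"
  proof (intro exI allI impI)
    fix m assume "N \<le> m"
    have "cmod (hinner adj \<iota> \<omega> (As m - A) B) \<le> hnorm adj \<iota> \<omega> (As m - A) * hnorm adj \<iota> \<omega> B"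
      by (rule hinner_Cauchy_Schwarz[OF local_obs_diff[OF As A] B B_pos])
    also have "\<dots> \<le> e * hnorm adj \<iota> \<omega> B"
      using close[OF \<open>N \<le> m\<close>] B_pos by (simp add: mult_right_mono)
    finally show "cmod (hinner adj \<iota> \<omega> (As m - A) B) \<le> e * hnorm adj \<iota> \<omega> B" .
  qed
qed

end

theorem theorem5p4:
  fixes sc :: "complex \<Rightarrow> 'a::{real_normed_algebra_1,banach}"
    and adj :: "'a \<Rightarrow> 'a"
    and Obs :: "('d::finite \<Rightarrow> int) set \<Rightarrow> 'a set"
    and \<iota> :: "('d \<Rightarrow> int) \<Rightarrow> 'a \<Rightarrow> 'a"
    and \<omega> :: "'a \<Rightarrow> complex"
    and As :: "nat \<Rightarrow> 'a"
    and u :: "nat \<Rightarrow> nat"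
    and Q :: "'a \<Rightarrow> complex"
  assumes "quasi_local_algebra sc adj Obs \<iota>"
    and "clustering_state sc adj Obs \<iota> \<omega>"
    and "\<forall>j. As j \<in> local_obs Obs"
    and "\<forall>e>0. \<exists>N. \<forall>m\<ge>N. \<forall>n\<ge>N. hnorm adj \<iota> \<omega> (As m - As n) < e"
    and "\<forall>j. supp Obs (As j) \<subseteq> zball (real (u j))"
    and "is_left_pseudolocal_charge sc adj Obs \<iota> \<omega> Q"
    and "\<forall>B\<in>local_obs Obs. (\<lambda>j. hinner adj \<iota> \<omega> (As j) B) \<longlonglongrightarrow> Q B"
  shows "(\<lambda>j. charge_norm adj Obs \<iota> \<omega>
             (\<lambda>B. Q B - left_charge sc adj \<omega> (local_seq \<iota> (u j) (As j)) B)) \<longlonglongrightarrow> 0"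
proof (rule ereal_LIMSEQ_zeroI[OF charge_norm_nonneg])
  interpret clustering_system sc adj Obs \<iota> \<omega> using assms(1,2) by (rule clustering_system.intro)
  have As: "\<And>j. As j \<in> local_obs Obs" using assms(3) by blast
  fix e :: real assume "0 < e"
  then obtain N where N: "\<And>m n. N \<le> m \<Longrightarrow> N \<le> n \<Longrightarrow> hnorm adj \<iota> \<omega> (As m - As n) < e"
    using assms(4) by blast
  have "charge_norm adj Obs \<iota> \<omega> (\<lambda>B. Q B - left_charge sc adj \<omega> (local_seq \<iota> (u j) (As j)) B) \<le> ereal e"
    if "N \<le> j" for j
  proof (rule charge_norm_le)
    fix B assume B: "B \<in> local_obs Obs" "0 < hnorm adj \<iota> \<omega> B"
    have "cmod (Q B - hinner adj \<iota> \<omega> (As j) B) \<le> e * hnorm adj \<iota> \<omega> B"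
      using assms(7) B(1) N[OF _ that] by (intro hinner_limit_dist_le[OF As As B]) (auto intro: less_imp_le)
    thus "cmod (Q B - left_charge sc adj \<omega> (local_seq \<iota> (u j) (As j)) B) \<le> e * hnorm adj \<iota> \<omega> B"
      unfolding left_charge_local_seq[OF As B(1)] .
  qed (use \<open>0 < e\<close> in simp)
  thus "\<exists>N. \<forall>j\<ge>N. charge_norm adj Obs \<iota> \<omega>
          (\<lambda>B. Q B - left_charge sc adj \<omega> (local_seq \<iota> (u j) (As j)) B) \<le> ereal e" by blast
qed

end
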